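(* Let $A\in\mathbb{R}^{n\times n}$ be nonsingular with $A^{-1}\geq 0$. Let $A=P_{1}-R_{1}+S_{1}$ be a regular double splitting and $A=P_{2}-R_{2}+S_{2}$ be a weak regular double splitting of $A$. Define $$W_{1}=\begin{pmatrix} P_{1}^{-1}R_{1} & -P_{1}^{-1}S_{1}\\ I & 0\end{pmatrix},\qquad W_{2}=\begin{pmatrix} P_{2}^{-1}R_{2} & -P_{2}^{-1}S_{2}\\ I & 0\end{pmatrix},$$ where $I$ is the $n\times n$ identity matrix. If $P_{1}^{-1}\geq P_{2}^{-1}$ and $R_{1}\geq R_{2}$, then $\rho(W_{1})\leq \rho(W_{2})< 1$.
   Context: For real matrices, $B\geq 0$ means all entries of $B$ are nonnegative, and $B\geq C$ means $B-C\geq 0$. $\rho(\cdot)$ denotes the spectral radius. A double splitting of a square matrix $A$ is a decomposition $A=P-R+S$ with $P$ nonsingular. It is called regular if $P^{-1}\geq 0$, $R\geq 0$ and $-S\geq 0$; it is called weak regular if $P^{-1}\geq 0$, $P^{-1}R\geq 0$ and $-P^{-1}S\geq 0$. *)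

theory Defs
  imports "Jordan_Normal_Form.Spectral_Radius"
begin

definition nonneg_mat :: "real mat \<Rightarrow> bool" where
  "nonneg_mat B \<longleftrightarrow> (\<forall>i < dim_row B. \<forall>j < dim_col B. B $$ (i, j) \<ge> 0)"

definition mat_inv :: "real mat \<Rightarrow> real mat" where
  "mat_inv A = (THE B. inverts_mat A B \<and> inverts_mat B A)"

definition rho :: "real mat \<Rightarrow> real" where
  "rho A = spectral_radius (map_mat complex_of_real A)"

definition double_splitting :: "nat \<Rightarrow> real mat \<Rightarrow> real mat \<Rightarrow> real mat \<Rightarrow> real mat \<Rightarrow> bool" where
  "double_splitting n A P R S \<longleftrightarrow>
     A \<in> carrier_mat n n \<and> P \<in> carrier_mat n n \<and> R \<in> carrier_mat n n \<and> S \<in> carrier_mat n n \<and>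
     invertible_mat P \<and> A = P - R + S"

definition regular_double_splitting :: "nat \<Rightarrow> real mat \<Rightarrow> real mat \<Rightarrow> real mat \<Rightarrow> real mat \<Rightarrow> bool" where
  "regular_double_splitting n A P R S \<longleftrightarrow>
     double_splitting n A P R S \<and> nonneg_mat (mat_inv P) \<and> nonneg_mat R \<and> nonneg_mat (- S)"

definition weak_regular_double_splitting :: "nat \<Rightarrow> real mat \<Rightarrow> real mat \<Rightarrow> real mat \<Rightarrow> real mat \<Rightarrow> bool" where
  "weak_regular_double_splitting n A P R S \<longleftrightarrow>
     double_splitting n A P R S \<and> nonneg_mat (mat_inv P) \<and> nonneg_mat (mat_inv P * R)
     \<and> nonneg_mat (- (mat_inv P * S))"

definition iter_mat :: "nat \<Rightarrow> real mat \<Rightarrow> real mat \<Rightarrow> real mat \<Rightarrow> real mat" where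
  "iter_mat n P R S = four_block_mat (mat_inv P * R) (- (mat_inv P * S)) (1\<^sub>m n) (0\<^sub>m n n)"

end

theory Submission
  imports Defs
begin

text \<open>
  For \<open>W = [[P\<^sup>-\<^sup>1 R, -P\<^sup>-\<^sup>1 S], [I, 0]]\<close> and \<open>t > 0\<close>, the vector \<open>y = (x, x / t)\<close> satisfies
  \<open>W y \<le> t y\<close> (resp. \<open>\<ge>\<close>) exactly when \<open>P\<^sup>-\<^sup>1 (t\<^sup>2 P - t R + S) x \<ge> 0\<close> (resp. \<open>\<le> 0\<close>), so
  the Collatz-Wielandt bounds for nonnegative matrices control \<open>\<rho>(W)\<close> through this quadratic pencil.
  For a weak regular splitting, \<open>x = A\<^sup>-\<^sup>1 1\<close> and \<open>t\<close> close to 1 give \<open>\<rho>(W\<^sub>2) < 1\<close>.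
  For the comparison let \<open>\<rho>(W\<^sub>2) < t < 1\<close>. Then \<open>t\<^sup>2 P\<^sub>1 - t R\<^sub>1 + S\<^sub>1 = t\<^sup>2 A - H\<close> with \<open>H \<ge> 0\<close>;
  put \<open>L = H A\<^sup>-\<^sup>1 \<ge> 0\<close> and \<open>x = A\<^sup>-\<^sup>1 w\<close>. If \<open>\<rho>(L) < t\<^sup>2\<close>, a positive \<open>w\<close> with \<open>L w \<le> t\<^sup>2 w\<close>
  makes the pencil of the first splitting nonnegative at the positive vector \<open>x\<close>, so \<open>\<rho>(W\<^sub>1) \<le> t\<close>.
  Otherwise a nonnegative \<open>w \<noteq> 0\<close> with \<open>L w \<ge> \<rho>(L) w\<close> makes it nonpositive at \<open>x \<ge> 0\<close>; since
  \<open>P\<^sub>1\<^sup>-\<^sup>1 \<ge> P\<^sub>2\<^sup>-\<^sup>1\<close>, \<open>R\<^sub>1 \<ge> R\<^sub>2\<close> and \<open>A x \<ge> 0\<close>, the pencil of the second splitting is even smaller,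
  which forces \<open>\<rho>(W\<^sub>2) \<ge> t\<close>, a contradiction.
\<close>

lemma mult_mat_vec_index_sum:
  "A \<in> carrier_mat nr nc \<Longrightarrow> v \<in> carrier_vec nc \<Longrightarrow> i < nr \<Longrightarrow>
    (A *\<^sub>v v) $ i = (\<Sum>j<nc. A $$ (i, j) * v $ j)"
  by (auto simp: scalar_prod_def lessThan_atLeast0 intro!: sum.cong)

lemma mult_mat_vec_lincomb_vec:
  assumes B: "(B :: 'a :: comm_ring mat) \<in> carrier_mat nr nc" and u: "u \<in> carrier_vec nc"
    and v1: "v1 \<in> carrier_vec nc" and v2: "v2 \<in> carrier_vec nc" and v3: "v3 \<in> carrier_vec nc"
    and u_eq: "\<And>j. j < nc \<Longrightarrow> u $ j = a * v1 $ j + b * v2 $ j + c * v3 $ j" and i: "i < nr"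
  shows "(B *\<^sub>v u) $ i = a * (B *\<^sub>v v1) $ i + b * (B *\<^sub>v v2) $ i + c * (B *\<^sub>v v3) $ i"
proof -
  have "(\<Sum>j<nc. B $$ (i, j) * u $ j) = (\<Sum>j<nc. a * (B $$ (i, j) * v1 $ j)
      + b * (B $$ (i, j) * v2 $ j) + c * (B $$ (i, j) * v3 $ j))"
    by (intro sum.cong) (auto simp: u_eq algebra_simps)
  then show ?thesis
    unfolding mult_mat_vec_index_sum[OF B u i] mult_mat_vec_index_sum[OF B v1 i]
      mult_mat_vec_index_sum[OF B v2 i] mult_mat_vec_index_sum[OF B v3 i]
    by (simp add: sum.distrib sum_distrib_left)
qed

lemma mult_mat_vec_lincomb_mat:
  assumes B: "(B :: 'a :: comm_ring mat) \<in> carrier_mat nr nc" and C: "C \<in> carrier_mat nr nc"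
    and D: "D \<in> carrier_mat nr nc" and E: "E \<in> carrier_mat nr nc" and x: "x \<in> carrier_vec nc"
    and B_eq: "\<And>i j. i < nr \<Longrightarrow> j < nc \<Longrightarrow> B $$ (i, j) = a * C $$ (i, j) + b * D $$ (i, j) + c * E $$ (i, j)"
    and i: "i < nr"
  shows "(B *\<^sub>v x) $ i = a * (C *\<^sub>v x) $ i + b * (D *\<^sub>v x) $ i + c * (E *\<^sub>v x) $ i"
  unfolding mult_mat_vec_index_sum[OF B x i] mult_mat_vec_index_sum[OF C x i]
    mult_mat_vec_index_sum[OF D x i] mult_mat_vec_index_sum[OF E x i]
  by (simp add: B_eq[OF i] sum_distrib_left sum.distrib algebra_simps)

lemma smult_mat_mult_mat_vec:
  "(D :: 'a :: comm_ring mat) \<in> carrier_mat nr nc \<Longrightarrow> v \<in> carrier_vec nc \<Longrightarrow>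
    (a \<cdot>\<^sub>m D) *\<^sub>v v = a \<cdot>\<^sub>v (D *\<^sub>v v)"
  by (intro eq_vecI) (auto simp: mult_mat_vec_index_sum[of _ nr nc] sum_distrib_left mult.assoc)

lemma mat_inv_inverse:
  assumes A: "A \<in> carrier_mat n n" and inv: "invertible_mat A"
  shows "mat_inv A \<in> carrier_mat n n" "A * mat_inv A = 1\<^sub>m n" "mat_inv A * A = 1\<^sub>m n"
proof -
  from inv A obtain B where AB: "A * B = 1\<^sub>m n" and "B * A = 1\<^sub>m (dim_row B)"
    unfolding invertible_mat_def inverts_mat_def by auto
  then have B: "B \<in> carrier_mat n n" and BA: "B * A = 1\<^sub>m n"
    using A by (metis carrier_matI carrier_matD(2) index_mult_mat(3) index_one_mat(3))+
  have "mat_inv A = B"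
    unfolding mat_inv_def
  proof (rule the_equality)
    show "inverts_mat A B \<and> inverts_mat B A"
      unfolding inverts_mat_def using AB BA A B by auto
    fix C assume "inverts_mat A C \<and> inverts_mat C A"
    then have AC: "A * C = 1\<^sub>m n" and "C * A = 1\<^sub>m (dim_row C)"
      unfolding inverts_mat_def using A by auto
    then have C: "C \<in> carrier_mat n n" and CA: "C * A = 1\<^sub>m n"
      using A by (metis carrier_matI carrier_matD(2) index_mult_mat(3) index_one_mat(3))+
    have "C = (C * A) * B" using AB A B C by (simp add: assoc_mult_mat[OF C A B])
    then show "C = B" using CA B by simp
  qed
  then show "mat_inv A \<in> carrier_mat n n" "A * mat_inv A = 1\<^sub>m n" "mat_inv A * A = 1\<^sub>m n"
    using B AB BA by auto
qed

lemma nonneg_matD: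
  "nonneg_mat B \<Longrightarrow> B \<in> carrier_mat nr nc \<Longrightarrow> i < nr \<Longrightarrow> j < nc \<Longrightarrow> 0 \<le> B $$ (i, j)"
  unfolding nonneg_mat_def by auto

lemma nonneg_mult_mat:
  assumes B: "B \<in> carrier_mat nr n" and C: "C \<in> carrier_mat n nc"
    and "nonneg_mat B" "nonneg_mat C"
  shows "nonneg_mat (B * C)"
  unfolding nonneg_mat_def
proof (intro allI impI)
  fix i j assume i: "i < dim_row (B * C)" and j: "j < dim_col (B * C)"
  have "(B * C) $$ (i, j) = (\<Sum>k<n. B $$ (i, k) * C $$ (k, j))"
    using B C i j by (auto simp: scalar_prod_def lessThan_atLeast0 intro!: sum.cong)
  also have "\<dots> \<ge> 0"
    using B C i j nonneg_matD[OF \<open>nonneg_mat B\<close> B] nonneg_matD[OF \<open>nonneg_mat C\<close> C]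
    by (auto intro!: sum_nonneg)
  finally show "0 \<le> (B * C) $$ (i, j)" .
qed

lemma nonneg_mat_pow:
  assumes B: "B \<in> carrier_mat n n" and "nonneg_mat B"
  shows "nonneg_mat (B ^\<^sub>m k)"
proof (induction k)
  case 0
  then show ?case unfolding nonneg_mat_def by auto
next
  case (Suc k)
  then show ?case using nonneg_mult_mat[OF pow_carrier_mat[OF B] B _ \<open>nonneg_mat B\<close>] by simp
qed

lemma nonneg_mult_mat_vec_mono:
  assumes B: "B \<in> carrier_mat nr nc" and "nonneg_mat B"
    and u: "u \<in> carrier_vec nc" and v: "v \<in> carrier_vec nc"
    and le: "\<And>j. j < nc \<Longrightarrow> u $ j \<le> v $ j" and i: "i < nr"
  shows "(B *\<^sub>v u) $ i \<le> (B *\<^sub>v v) $ i"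
  unfolding mult_mat_vec_index_sum[OF B u i] mult_mat_vec_index_sum[OF B v i]
  by (intro sum_mono mult_left_mono le) (auto intro: nonneg_matD[OF \<open>nonneg_mat B\<close> B i])

lemma nonneg_mult_mat_vec_nonneg:
  assumes B: "B \<in> carrier_mat nr nc" and "nonneg_mat B" and v: "v \<in> carrier_vec nc"
    and "\<And>j. j < nc \<Longrightarrow> 0 \<le> v $ j" and i: "i < nr"
  shows "0 \<le> (B *\<^sub>v v) $ i"
  using nonneg_mult_mat_vec_mono[OF B \<open>nonneg_mat B\<close> zero_carrier_vec v _ i] assms(4) B i by simp

lemma nonneg_mat_diff_mult_vec_le:
  assumes B: "B \<in> carrier_mat nr nc" and C: "C \<in> carrier_mat nr nc" and "nonneg_mat (B - C)"
    and v: "v \<in> carrier_vec nc" and "\<And>j. j < nc \<Longrightarrow> 0 \<le> v $ j" and i: "i < nr"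
  shows "(C *\<^sub>v v) $ i \<le> (B *\<^sub>v v) $ i"
proof -
  have "0 \<le> ((B - C) *\<^sub>v v) $ i"
    by (rule nonneg_mult_mat_vec_nonneg[OF _ \<open>nonneg_mat (B - C)\<close> v]) (use assms(5) i B C in auto)
  then show ?thesis using B C v i by (simp add: minus_mult_distrib_mat_vec)
qed

text \<open>A row of a nonnegative matrix with a right inverse cannot vanish.\<close>
lemma nonneg_mult_mat_vec_pos:
  assumes B: "B \<in> carrier_mat n n" and "nonneg_mat B" and C: "C \<in> carrier_mat n n"
    and BC: "B * C = 1\<^sub>m n" and v: "v \<in> carrier_vec n" and pos: "\<And>j. j < n \<Longrightarrow> 0 < v $ j"
    and i: "i < n"
  shows "0 < (B *\<^sub>v v) $ i"
proof -
  have "\<exists>j<n. B $$ (i, j) \<noteq> 0"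
  proof (rule ccontr)
    assume "\<not> ?thesis"
    then have "(B * C) $$ (i, i) = 0" using B C i by (simp add: scalar_prod_def)
    then show False using BC i by simp
  qed
  then obtain j where j: "j < n" and "B $$ (i, j) \<noteq> 0" by auto
  then have "0 < B $$ (i, j) * v $ j"
    using nonneg_matD[OF \<open>nonneg_mat B\<close> B i j] pos[OF j] by simp
  also have "\<dots> \<le> (\<Sum>k<n. B $$ (i, k) * v $ k)"
    by (rule member_le_sum[where f = "\<lambda>k. B $$ (i, k) * v $ k"])
       (use j nonneg_matD[OF \<open>nonneg_mat B\<close> B i] pos in \<open>auto simp: less_imp_le\<close>)
  finally show ?thesis unfolding mult_mat_vec_index_sum[OF B v i] .
qed

lemma rho_nonneg: "B \<in> carrier_mat n n \<Longrightarrow> 0 < n \<Longrightarrow> 0 \<le> rho B"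
  unfolding rho_def using spectral_radius_mem_max(1)[of "map_mat complex_of_real B" n] by auto

text \<open>The moduli of an eigenvector for an eigenvalue of maximal modulus.\<close>
lemma exists_nonneg_superinvariant_vec:
  assumes B: "B \<in> carrier_mat n n" and "nonneg_mat B" and n: "0 < n"
  shows "\<exists>y \<in> carrier_vec n. (\<forall>i<n. 0 \<le> y $ i) \<and> (\<exists>i<n. 0 < y $ i) \<and>
           (\<forall>i<n. rho B * y $ i \<le> (B *\<^sub>v y) $ i)"
proof -
  let ?C = "map_mat complex_of_real B"
  have C: "?C \<in> carrier_mat n n" using B by auto
  from spectral_radius_mem_max(1)[OF C n] obtain mu where "mu \<in> spectrum ?C"
    and rho_mu: "rho B = norm mu" unfolding rho_def by auto
  then obtain v where "eigenvector ?C v mu" unfolding spectrum_def eigenvalue_def by auto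
  then have v: "v \<in> carrier_vec n" and "v \<noteq> 0\<^sub>v n" and Cv: "?C *\<^sub>v v = mu \<cdot>\<^sub>v v"
    unfolding eigenvector_def using B by auto
  then obtain i0 where i0: "i0 < n" "v $ i0 \<noteq> 0" by (metis eq_vecI index_zero_vec carrier_vecD)
  define y where "y = vec n (\<lambda>i. cmod (v $ i))"
  have y: "y \<in> carrier_vec n" unfolding y_def by auto
  have "rho B * y $ i \<le> (B *\<^sub>v y) $ i" if i: "i < n" for i
  proof -
    have "mu * v $ i = (\<Sum>j<n. complex_of_real (B $$ (i, j)) * v $ j)"
      using arg_cong[OF Cv, of "\<lambda>w. w $ i"] mult_mat_vec_index_sum[OF C v i] B i v by simp
    moreover have "rho B * y $ i = norm (mu * v $ i)"
      using i rho_mu unfolding y_def by (simp add: norm_mult)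
    ultimately have "rho B * y $ i = norm (\<Sum>j<n. complex_of_real (B $$ (i, j)) * v $ j)"
      by simp
    also have "\<dots> \<le> (\<Sum>j<n. norm (complex_of_real (B $$ (i, j)) * v $ j))"
      by (rule norm_sum)
    also have "\<dots> = (\<Sum>j<n. B $$ (i, j) * y $ j)"
      using nonneg_matD[OF \<open>nonneg_mat B\<close> B i] unfolding y_def
      by (intro sum.cong) (auto simp: norm_mult)
    finally show ?thesis using mult_mat_vec_index_sum[OF B y i] by simp
  qed
  moreover have "0 < y $ i0" using i0 unfolding y_def by auto
  ultimately show ?thesis using y i0(1) by (intro bexI[of _ y]) (auto simp: y_def)
qed

lemma rho_le_of_pos_subinvariant_vec:
  assumes B: "B \<in> carrier_mat n n" and "nonneg_mat B" and n: "0 < n"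
    and x: "x \<in> carrier_vec n" and x_pos: "\<And>i. i < n \<Longrightarrow> 0 < x $ i"
    and Bx: "\<And>i. i < n \<Longrightarrow> (B *\<^sub>v x) $ i \<le> s * x $ i"
  shows "rho B \<le> s"
proof -
  from exists_nonneg_superinvariant_vec[OF B \<open>nonneg_mat B\<close> n] obtain y where y: "y \<in> carrier_vec n"
    and y_nonneg: "\<And>i. i < n \<Longrightarrow> 0 \<le> y $ i" and "\<exists>i<n. 0 < y $ i"
    and By: "\<And>i. i < n \<Longrightarrow> rho B * y $ i \<le> (B *\<^sub>v y) $ i" by blast
  text \<open>Scale \<open>x\<close> until it touches \<open>y\<close> from above at some index \<open>i0\<close>.\<close>
  define c where "c = Max ((\<lambda>i. y $ i / x $ i) ` {..<n})"
  have fin: "finite ((\<lambda>i. y $ i / x $ i) ` {..<n})" by auto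
  from Max_in[OF fin] n obtain i0 where i0: "i0 < n" and c_i0: "c = y $ i0 / x $ i0"
    unfolding c_def by fastforce
  have y_le: "y $ j \<le> c * x $ j" if "j < n" for j
    using Max_ge[OF fin, of "y $ j / x $ j"] x_pos[OF that] that
    unfolding c_def by (simp add: divide_le_eq)
  from \<open>\<exists>i<n. 0 < y $ i\<close> obtain j where "j < n" "0 < y $ j" by auto
  then have c_pos: "0 < c" using y_le[of j] x_pos[of j] by (smt (verit) mult_nonpos_nonneg)
  have y_i0: "y $ i0 = c * x $ i0" using c_i0 x_pos[OF i0] by simp
  have "rho B * y $ i0 \<le> (B *\<^sub>v y) $ i0" by (rule By[OF i0])
  also have "\<dots> \<le> (B *\<^sub>v (c \<cdot>\<^sub>v x)) $ i0"
    by (rule nonneg_mult_mat_vec_mono[OF B \<open>nonneg_mat B\<close> y _ _ i0]) (use x y_le in auto)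
  also have "\<dots> = c * (B *\<^sub>v x) $ i0" using B x i0 by (simp add: mult_mat_vec)
  also have "\<dots> \<le> c * (s * x $ i0)" using Bx[OF i0] c_pos by simp
  finally have "rho B * (c * x $ i0) \<le> s * (c * x $ i0)" unfolding y_i0 by (simp add: ac_simps)
  moreover have "0 < c * x $ i0" using c_pos x_pos[OF i0] by simp
  ultimately show ?thesis by (rule mult_right_le_imp_le)
qed

lemma spectral_radius_smult_le:
  assumes D: "D \<in> carrier_mat n n" and n: "0 < n" and a: "0 < a"
  shows "spectral_radius (complex_of_real a \<cdot>\<^sub>m D) \<le> a * spectral_radius D"
proof -
  let ?a = "complex_of_real a"
  have aD: "?a \<cdot>\<^sub>m D \<in> carrier_mat n n" using D by auto
  from spectral_radius_mem_max(1)[OF aD n] obtain mu where "mu \<in> spectrum (?a \<cdot>\<^sub>m D)"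
    and rho_mu: "spectral_radius (?a \<cdot>\<^sub>m D) = norm mu" by auto
  then obtain v where "eigenvector (?a \<cdot>\<^sub>m D) v mu" unfolding spectrum_def eigenvalue_def by auto
  then have v: "v \<in> carrier_vec n" and "v \<noteq> 0\<^sub>v n" and aDv: "(?a \<cdot>\<^sub>m D) *\<^sub>v v = mu \<cdot>\<^sub>v v"
    unfolding eigenvector_def using D by auto
  have "D *\<^sub>v v = (mu / ?a) \<cdot>\<^sub>v v"
  proof (rule eq_vecI)
    fix i assume "i < dim_vec ((mu / ?a) \<cdot>\<^sub>v v)"
    then have i: "i < n" using v by auto
    have "?a * (D *\<^sub>v v) $ i = mu * v $ i"
      using arg_cong[OF aDv, of "\<lambda>w. w $ i"] smult_mat_mult_mat_vec[OF D v] i D v by simp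
    then show "(D *\<^sub>v v) $ i = ((mu / ?a) \<cdot>\<^sub>v v) $ i" using i v a by (simp add: field_simps)
  qed (use D v in auto)
  then have "eigenvector D v (mu / ?a)"
    unfolding eigenvector_def using D v \<open>v \<noteq> 0\<^sub>v n\<close> by auto
  then have "norm (mu / ?a) \<in> norm ` spectrum D" unfolding spectrum_def eigenvalue_def by auto
  from spectral_radius_mem_max(2)[OF D n this] have "norm mu / a \<le> spectral_radius D"
    using a by (simp add: norm_divide)
  then show ?thesis using rho_mu a by (simp add: divide_le_eq mult.commute)
qed

lemma rho_smult_le:
  assumes B: "B \<in> carrier_mat n n" and "0 < n" and "0 < a"
  shows "rho (a \<cdot>\<^sub>m B) \<le> a * rho B"
proof -
  have "map_mat complex_of_real (a \<cdot>\<^sub>m B) = complex_of_real a \<cdot>\<^sub>m map_mat complex_of_real B"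
    using B by (intro eq_matI) auto
  then show ?thesis
    unfolding rho_def using spectral_radius_smult_le[of _ n] B assms(2,3) by simp
qed

lemma rho_less_1_pow_bounded:
  assumes B: "B \<in> carrier_mat n n" and "rho B < 1"
  obtains c where "\<And>k i j. i < n \<Longrightarrow> j < n \<Longrightarrow> \<bar>(B ^\<^sub>m k) $$ (i, j)\<bar> \<le> c"
proof -
  let ?C = "map_mat complex_of_real B"
  from spectral_radius_jnf_norm_bound_less_1_upper_triangular[of ?C n] B \<open>rho B < 1\<close>
  obtain c where c: "\<And>k. norm_bound (?C ^\<^sub>m k) c" unfolding rho_def by auto
  have "\<bar>(B ^\<^sub>m k) $$ (i, j)\<bar> \<le> c" if "i < n" "j < n" for k i j
  proof -
    have "?C ^\<^sub>m k = map_mat complex_of_real (B ^\<^sub>m k)"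
      using of_real_hom.mat_hom_pow[OF B] by metis
    with c[of k] that B show ?thesis unfolding norm_bound_def by auto
  qed
  then show ?thesis by (rule that)
qed

lemma nonneg_mat_pow_superinvariant:
  assumes B: "B \<in> carrier_mat n n" and "nonneg_mat B" and z: "z \<in> carrier_vec n"
    and "0 \<le> t" and Bz: "\<And>i. i < n \<Longrightarrow> t * z $ i \<le> (B *\<^sub>v z) $ i" and i: "i < n"
  shows "t ^ k * z $ i \<le> (B ^\<^sub>m k *\<^sub>v z) $ i"
  using i
proof (induction k arbitrary: i)
  case 0
  then show ?case using B z by simp
next
  case (Suc k)
  have Bk: "B ^\<^sub>m k \<in> carrier_mat n n" using B by simp
  have "t ^ Suc k * z $ i = t * (t ^ k * z $ i)" by simp
  also have "\<dots> \<le> t * (B ^\<^sub>m k *\<^sub>v z) $ i"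
    using Suc \<open>0 \<le> t\<close> by (intro mult_left_mono) auto
  also have "\<dots> = (B ^\<^sub>m k *\<^sub>v (t \<cdot>\<^sub>v z)) $ i"
    using B Bk z Suc.prems by (simp add: mult_mat_vec[OF Bk z])
  also have "\<dots> \<le> (B ^\<^sub>m k *\<^sub>v (B *\<^sub>v z)) $ i"
    by (rule nonneg_mult_mat_vec_mono[OF Bk nonneg_mat_pow[OF B \<open>nonneg_mat B\<close>]])
       (use z B Bz Suc.prems in auto)
  also have "\<dots> = (B ^\<^sub>m Suc k *\<^sub>v z) $ i" using assoc_mult_mat_vec[OF Bk B z] by simp
  finally show ?case .
qed

lemma rho_ge_of_nonneg_superinvariant_vec:
  assumes B: "B \<in> carrier_mat n n" and "nonneg_mat B" and n: "0 < n"
    and z: "z \<in> carrier_vec n" and z_nonneg: "\<And>i. i < n \<Longrightarrow> 0 \<le> z $ i"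
    and "\<exists>i<n. 0 < z $ i" and t: "0 < t" and Bz: "\<And>i. i < n \<Longrightarrow> t * z $ i \<le> (B *\<^sub>v z) $ i"
  shows "t \<le> rho B"
proof (rule ccontr)
  assume "\<not> t \<le> rho B"
  define s where "s = (rho B + t) / 2"
  have s: "0 < s" "rho B < s" "s < t"
    using \<open>\<not> t \<le> rho B\<close> rho_nonneg[OF B n] unfolding s_def by auto
  text \<open>\<open>C = B / s\<close> has spectral radius below 1, yet \<open>C z \<ge> (t / s) z\<close> with \<open>t / s > 1\<close>.\<close>
  define C where "C = (1 / s) \<cdot>\<^sub>m B"
  have C: "C \<in> carrier_mat n n" using B unfolding C_def by auto
  have "nonneg_mat C" using \<open>nonneg_mat B\<close> s B unfolding C_def nonneg_mat_def by auto
  have "rho C \<le> (1 / s) * rho B" unfolding C_def by (rule rho_smult_le) (use B n s in auto)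
  also have "\<dots> < 1" using s by (simp add: divide_less_eq)
  finally obtain c where c: "\<And>k i j. i < n \<Longrightarrow> j < n \<Longrightarrow> \<bar>(C ^\<^sub>m k) $$ (i, j)\<bar> \<le> c"
    using rho_less_1_pow_bounded[OF C] by blast
  have Cz: "t / s * z $ i \<le> (C *\<^sub>v z) $ i" if "i < n" for i
    using Bz[OF that] s smult_mat_mult_mat_vec[OF B z, of "1 / s"] that z B
    unfolding C_def by (simp add: field_simps)
  from \<open>\<exists>i<n. 0 < z $ i\<close> obtain i0 where i0: "i0 < n" "0 < z $ i0" by auto
  have bound: "(t / s) ^ k * z $ i0 \<le> c * (\<Sum>j<n. z $ j)" for k
  proof -
    have Ck: "C ^\<^sub>m k \<in> carrier_mat n n" using C by simp
    have "(t / s) ^ k * z $ i0 \<le> (C ^\<^sub>m k *\<^sub>v z) $ i0"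
      by (rule nonneg_mat_pow_superinvariant[OF C \<open>nonneg_mat C\<close> z _ Cz i0(1)]) (use s in auto)
    also have "\<dots> = (\<Sum>j<n. (C ^\<^sub>m k) $$ (i0, j) * z $ j)"
      by (rule mult_mat_vec_index_sum[OF Ck z i0(1)])
    also have "\<dots> \<le> (\<Sum>j<n. c * z $ j)"
    proof (rule sum_mono)
      fix j assume "j \<in> {..<n}"
      then have "(C ^\<^sub>m k) $$ (i0, j) \<le> c" and "0 \<le> z $ j"
        using c[OF i0(1), of j k] z_nonneg[of j] by auto
      then show "(C ^\<^sub>m k) $$ (i0, j) * z $ j \<le> c * z $ j" by (rule mult_right_mono)
    qed
    finally show ?thesis by (simp add: sum_distrib_left)
  qed
  have "1 < t / s" using s by simp
  from real_arch_pow[OF this, of "c * (\<Sum>j<n. z $ j) / z $ i0"]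
  obtain k where "c * (\<Sum>j<n. z $ j) / z $ i0 < (t / s) ^ k" by auto
  then show False using bound[of k] i0 by (simp add: divide_less_eq)
qed

lemma det_minus_ne_0_of_rho_less:
  assumes L: "L \<in> carrier_mat n n" and n: "0 < n" and "rho L < tau"
  shows "det (tau \<cdot>\<^sub>m 1\<^sub>m n - L) \<noteq> 0"
proof
  let ?K = "tau \<cdot>\<^sub>m 1\<^sub>m n - L"
  have K: "?K \<in> carrier_mat n n" using L by auto
  assume "det ?K = 0"
  then obtain v where v: "v \<in> carrier_vec n" and "v \<noteq> 0\<^sub>v n" and Kv_0: "?K *\<^sub>v v = 0\<^sub>v n"
    unfolding det_0_iff_vec_prod_zero[OF K] by auto
  have Kv: "?K *\<^sub>v v = tau \<cdot>\<^sub>v v - L *\<^sub>v v"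
    using L v by (simp add: minus_mult_distrib_mat_vec[of _ n n] smult_mat_mult_mat_vec[of _ n n])
  have "L *\<^sub>v v = tau \<cdot>\<^sub>v v"
  proof (rule eq_vecI)
    fix i assume "i < dim_vec (tau \<cdot>\<^sub>v v)"
    then have i: "i < n" using v by simp
    have "(?K *\<^sub>v v) $ i = 0" using Kv_0 i by simp
    then show "(L *\<^sub>v v) $ i = (tau \<cdot>\<^sub>v v) $ i" unfolding Kv using i v L by simp
  qed (use L v in simp)
  let ?C = "map_mat complex_of_real L" and ?v = "map_vec complex_of_real v"
  have "?C *\<^sub>v ?v = map_vec complex_of_real (L *\<^sub>v v)"
    using of_real_hom.mult_mat_vec_hom[OF L v] by metis
  also have "\<dots> = complex_of_real tau \<cdot>\<^sub>v ?v" unfolding \<open>L *\<^sub>v v = tau \<cdot>\<^sub>v v\<close> by auto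
  finally have "eigenvector ?C ?v (complex_of_real tau)"
    unfolding eigenvector_def using \<open>v \<noteq> 0\<^sub>v n\<close> v L by (auto simp: vec_eq_iff)
  then have "complex_of_real tau \<in> spectrum ?C" unfolding spectrum_def eigenvalue_def by auto
  then have "norm (complex_of_real tau) \<in> norm ` spectrum ?C" by (rule imageI)
  from spectral_radius_mem_max(2)[OF _ n this] L have "\<bar>tau\<bar> \<le> rho L" unfolding rho_def by simp
  with \<open>rho L < tau\<close> show False by simp
qed

lemma exists_pos_subinvariant_vec:
  assumes L: "L \<in> carrier_mat n n" and "nonneg_mat L" and n: "0 < n" and "rho L < tau"
  shows "\<exists>w \<in> carrier_vec n. (\<forall>i<n. 0 < w $ i) \<and> (\<forall>i<n. (L *\<^sub>v w) $ i < tau * w $ i)"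
proof -
  define K where "K = tau \<cdot>\<^sub>m 1\<^sub>m n - L"
  have K: "K \<in> carrier_mat n n" unfolding K_def using L by auto
  from det_non_zero_imp_unit[OF K det_minus_ne_0_of_rho_less[OF L n \<open>rho L < tau\<close>, folded K_def]]
  obtain K' where K': "K' \<in> carrier_mat n n" and "K * K' = 1\<^sub>m n"
    unfolding Units_def ring_mat_def by auto
  define w where "w = K' *\<^sub>v vec n (\<lambda>_. 1)"
  have w: "w \<in> carrier_vec n" unfolding w_def using K' by simp
  have "K *\<^sub>v w = vec n (\<lambda>_. 1)"
    unfolding w_def using assoc_mult_mat_vec[OF K K', of "vec n (\<lambda>_. 1)"] \<open>K * K' = 1\<^sub>m n\<close> by simp
  then have Kw: "tau \<cdot>\<^sub>v w - L *\<^sub>v w = vec n (\<lambda>_. 1)"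
    using L w by (simp add: K_def minus_mult_distrib_mat_vec[of _ n n] smult_mat_mult_mat_vec[of _ n n])
  have w_eq: "tau * w $ i - (L *\<^sub>v w) $ i = 1" if "i < n" for i
    using arg_cong[OF Kw, of "\<lambda>v. v $ i"] that L w by simp
  text \<open>A negative entry of \<open>w\<close> would make its negative part \<open>u\<close> a nonzero nonnegative vector
    with \<open>L u \<ge> tau u\<close>, contradicting \<open>rho L < tau\<close>.\<close>
  define u where "u = vec n (\<lambda>i. max (- w $ i) 0)"
  have u: "u \<in> carrier_vec n" and u_nonneg: "\<And>i. i < n \<Longrightarrow> 0 \<le> u $ i" unfolding u_def by auto
  have Lu: "tau * u $ i \<le> (L *\<^sub>v u) $ i" if i: "i < n" for i
  proof (cases "0 \<le> w $ i")
    case True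
    then show ?thesis using nonneg_mult_mat_vec_nonneg[OF L \<open>nonneg_mat L\<close> u u_nonneg i] i
      unfolding u_def by simp
  next
    case False
    have "(L *\<^sub>v ((-1) \<cdot>\<^sub>v w)) $ i \<le> (L *\<^sub>v u) $ i"
      by (rule nonneg_mult_mat_vec_mono[OF L \<open>nonneg_mat L\<close> _ u _ i]) (use w in \<open>auto simp: u_def\<close>)
    then show ?thesis using False w_eq[OF i] i L w unfolding u_def by (simp add: mult_mat_vec)
  qed
  have w_nonneg: "0 \<le> w $ i" if "i < n" for i
  proof (rule ccontr)
    assume "\<not> 0 \<le> w $ i"
    then have "0 < u $ i" using that unfolding u_def by simp
    from rho_ge_of_nonneg_superinvariant_vec[OF L \<open>nonneg_mat L\<close> n u u_nonneg _ _ Lu] this that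
    have "tau \<le> rho L" using rho_nonneg[OF L n] \<open>rho L < tau\<close> by auto
    with \<open>rho L < tau\<close> show False by simp
  qed
  have "0 < tau" using rho_nonneg[OF L n] \<open>rho L < tau\<close> by simp
  have "0 < tau * w $ i" "(L *\<^sub>v w) $ i < tau * w $ i" if i: "i < n" for i
    using nonneg_mult_mat_vec_nonneg[OF L \<open>nonneg_mat L\<close> w w_nonneg i] w_eq[OF i] by auto
  then have "0 < w $ i" "(L *\<^sub>v w) $ i < tau * w $ i" if "i < n" for i
    using \<open>0 < tau\<close> that by (auto simp: zero_less_mult_iff)
  then show ?thesis using w by blast
qed

lemma nonneg_companion_block_mat:
  assumes M: "M \<in> carrier_mat n n" and N: "N \<in> carrier_mat n n"
    and "nonneg_mat M" and "nonneg_mat N"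
  shows "nonneg_mat (four_block_mat M N (1\<^sub>m n) (0\<^sub>m n n))"
  unfolding nonneg_mat_def using M N nonneg_matD[OF \<open>nonneg_mat M\<close> M] nonneg_matD[OF \<open>nonneg_mat N\<close> N]
  by auto

lemma companion_block_mat_mult_vec:
  assumes M: "M \<in> carrier_mat n n" and N: "N \<in> carrier_mat n n" and x: "(x :: real vec) \<in> carrier_vec n"
  shows "i < n \<Longrightarrow> (four_block_mat M N (1\<^sub>m n) (0\<^sub>m n n) *\<^sub>v (x @\<^sub>v (c \<cdot>\<^sub>v x))) $ i
      = (M *\<^sub>v x) $ i + c * (N *\<^sub>v x) $ i"
    and "n \<le> i \<Longrightarrow> i < n + n \<Longrightarrow> (four_block_mat M N (1\<^sub>m n) (0\<^sub>m n n) *\<^sub>v (x @\<^sub>v (c \<cdot>\<^sub>v x))) $ i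
      = x $ (i - n)"
  using four_block_mat_mult_vec[OF M N one_carrier_mat zero_carrier_mat x, of "c \<cdot>\<^sub>v x"] M N x
  by (auto simp: mult_mat_vec)

lemma rho_companion_block_mat_le:
  assumes M: "M \<in> carrier_mat n n" and N: "N \<in> carrier_mat n n" and "nonneg_mat M" "nonneg_mat N"
    and n: "0 < n" and x: "x \<in> carrier_vec n" and x_pos: "\<And>i. i < n \<Longrightarrow> 0 < x $ i" and t: "0 < t"
    and le: "\<And>i. i < n \<Longrightarrow> t * (M *\<^sub>v x) $ i + (N *\<^sub>v x) $ i \<le> t * t * x $ i"
  shows "rho (four_block_mat M N (1\<^sub>m n) (0\<^sub>m n n)) \<le> t"
proof (rule rho_le_of_pos_subinvariant_vec[where x = "x @\<^sub>v ((1 / t) \<cdot>\<^sub>v x)"])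
  show "four_block_mat M N (1\<^sub>m n) (0\<^sub>m n n) \<in> carrier_mat (n + n) (n + n)" using M N by auto
  show "nonneg_mat (four_block_mat M N (1\<^sub>m n) (0\<^sub>m n n))"
    by (rule nonneg_companion_block_mat) fact+
  show "x @\<^sub>v (1 / t) \<cdot>\<^sub>v x \<in> carrier_vec (n + n)" using x by auto
  show "0 < (x @\<^sub>v (1 / t) \<cdot>\<^sub>v x) $ i" if "i < n + n" for i
    using that x x_pos t by (cases "i < n") auto
  fix i assume i: "i < n + n"
  show "(four_block_mat M N (1\<^sub>m n) (0\<^sub>m n n) *\<^sub>v (x @\<^sub>v (1 / t) \<cdot>\<^sub>v x)) $ i
      \<le> t * (x @\<^sub>v (1 / t) \<cdot>\<^sub>v x) $ i"
  proof (cases "i < n")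
    case True
    then show ?thesis using companion_block_mat_mult_vec(1)[OF M N x True] le[OF True] x t
      by (simp add: field_simps)
  qed (use companion_block_mat_mult_vec(2)[OF M N x] x i t in auto)
qed (use n in auto)

lemma rho_companion_block_mat_ge:
  assumes M: "M \<in> carrier_mat n n" and N: "N \<in> carrier_mat n n" and "nonneg_mat M" "nonneg_mat N"
    and n: "0 < n" and x: "x \<in> carrier_vec n" and x_nonneg: "\<And>i. i < n \<Longrightarrow> 0 \<le> x $ i"
    and "\<exists>i<n. 0 < x $ i" and t: "0 < t"
    and ge: "\<And>i. i < n \<Longrightarrow> t * t * x $ i \<le> t * (M *\<^sub>v x) $ i + (N *\<^sub>v x) $ i"
  shows "t \<le> rho (four_block_mat M N (1\<^sub>m n) (0\<^sub>m n n))"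
proof (rule rho_ge_of_nonneg_superinvariant_vec[where z = "x @\<^sub>v ((1 / t) \<cdot>\<^sub>v x)"])
  show "four_block_mat M N (1\<^sub>m n) (0\<^sub>m n n) \<in> carrier_mat (n + n) (n + n)" using M N by auto
  show "nonneg_mat (four_block_mat M N (1\<^sub>m n) (0\<^sub>m n n))"
    by (rule nonneg_companion_block_mat) fact+
  show "x @\<^sub>v (1 / t) \<cdot>\<^sub>v x \<in> carrier_vec (n + n)" using x by auto
  show "0 \<le> (x @\<^sub>v (1 / t) \<cdot>\<^sub>v x) $ i" if "i < n + n" for i
    using that x x_nonneg t by (cases "i < n") auto
  show "\<exists>i<n + n. 0 < (x @\<^sub>v (1 / t) \<cdot>\<^sub>v x) $ i"
    using \<open>\<exists>i<n. 0 < x $ i\<close> x by (metis index_append_vec(1) trans_less_add1 carrier_vecD)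
  fix i assume i: "i < n + n"
  show "t * (x @\<^sub>v (1 / t) \<cdot>\<^sub>v x) $ i
      \<le> (four_block_mat M N (1\<^sub>m n) (0\<^sub>m n n) *\<^sub>v (x @\<^sub>v (1 / t) \<cdot>\<^sub>v x)) $ i"
  proof (cases "i < n")
    case True
    then show ?thesis using companion_block_mat_mult_vec(1)[OF M N x True] ge[OF True] x t
      by (simp add: field_simps)
  qed (use companion_block_mat_mult_vec(2)[OF M N x] x i t in auto)
qed (use n t in auto)

text \<open>A nonzero \<open>t\<close> is an eigenvalue of \<open>iter_mat n P R S\<close> exactly when \<open>t\<^sup>2 P - t R + S\<close> is singular.\<close>
definition quad_pencil :: "real \<Rightarrow> real mat \<Rightarrow> real mat \<Rightarrow> real mat \<Rightarrow> real mat" where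
  "quad_pencil t P R S = (t * t) \<cdot>\<^sub>m P - t \<cdot>\<^sub>m R + S"

lemma quad_pencil_carrier:
  "P \<in> carrier_mat n n \<Longrightarrow> R \<in> carrier_mat n n \<Longrightarrow> S \<in> carrier_mat n n \<Longrightarrow>
    quad_pencil t P R S \<in> carrier_mat n n"
  by (simp add: quad_pencil_def)

lemma double_splitting_mat_inv:
  assumes "double_splitting n A P R S"
  shows "mat_inv P \<in> carrier_mat n n" "mat_inv P * P = 1\<^sub>m n"
  using mat_inv_inverse[of P n] assms unfolding double_splitting_def by auto

lemma mat_inv_quad_pencil_mult_vec:
  assumes ds: "double_splitting n A P R S" and x: "x \<in> carrier_vec n" and i: "i < n"
  shows "(mat_inv P *\<^sub>v (quad_pencil t P R S *\<^sub>v x)) $ i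
      = t * t * x $ i - t * ((mat_inv P * R) *\<^sub>v x) $ i - ((- (mat_inv P * S)) *\<^sub>v x) $ i"
    and "(mat_inv P *\<^sub>v (quad_pencil t P R S *\<^sub>v x)) $ i
      = (t * t - 1) * x $ i + (1 - t) * (mat_inv P *\<^sub>v (R *\<^sub>v x)) $ i + (mat_inv P *\<^sub>v (A *\<^sub>v x)) $ i"
proof -
  have A: "A \<in> carrier_mat n n" and P: "P \<in> carrier_mat n n" and R: "R \<in> carrier_mat n n"
    and S: "S \<in> carrier_mat n n" and A_eq: "A = P - R + S"
    using ds unfolding double_splitting_def by auto
  note Q = double_splitting_mat_inv[OF ds]
  note pencil = quad_pencil_carrier[OF P R S, of t]
  have QPx: "mat_inv P *\<^sub>v (P *\<^sub>v x) = x" using assoc_mult_mat_vec[OF Q(1) P x] Q(2) x by simp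
  have "(quad_pencil t P R S *\<^sub>v x) $ j = (t * t) * (P *\<^sub>v x) $ j + (- t) * (R *\<^sub>v x) $ j + 1 * (S *\<^sub>v x) $ j"
    if "j < n" for j
    by (rule mult_mat_vec_lincomb_mat[OF pencil P R S x _ that]) (use P R S in \<open>auto simp: quad_pencil_def\<close>)
  then have "(mat_inv P *\<^sub>v (quad_pencil t P R S *\<^sub>v x)) $ i = (t * t) * (mat_inv P *\<^sub>v (P *\<^sub>v x)) $ i
      + (- t) * (mat_inv P *\<^sub>v (R *\<^sub>v x)) $ i + 1 * (mat_inv P *\<^sub>v (S *\<^sub>v x)) $ i"
    by (intro mult_mat_vec_lincomb_vec[OF Q(1) _ _ _ _ _ i]) (use pencil P R S x in auto)
  moreover have "(- (mat_inv P * S)) *\<^sub>v x = - (mat_inv P *\<^sub>v (S *\<^sub>v x))"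
    using assoc_mult_mat_vec[OF Q(1) S x] Q S x by simp
  ultimately show "(mat_inv P *\<^sub>v (quad_pencil t P R S *\<^sub>v x)) $ i
      = t * t * x $ i - t * ((mat_inv P * R) *\<^sub>v x) $ i - ((- (mat_inv P * S)) *\<^sub>v x) $ i"
    using QPx Q R S x i by simp
  have "(quad_pencil t P R S *\<^sub>v x) $ j
      = (t * t - 1) * (P *\<^sub>v x) $ j + (1 - t) * (R *\<^sub>v x) $ j + 1 * (A *\<^sub>v x) $ j" if "j < n" for j
    by (rule mult_mat_vec_lincomb_mat[OF pencil P R A x _ that])
       (use P R S A_eq in \<open>auto simp: quad_pencil_def algebra_simps\<close>)
  then have "(mat_inv P *\<^sub>v (quad_pencil t P R S *\<^sub>v x)) $ i = (t * t - 1) * (mat_inv P *\<^sub>v (P *\<^sub>v x)) $ i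
      + (1 - t) * (mat_inv P *\<^sub>v (R *\<^sub>v x)) $ i + 1 * (mat_inv P *\<^sub>v (A *\<^sub>v x)) $ i"
    by (intro mult_mat_vec_lincomb_vec[OF Q(1) _ _ _ _ _ i]) (use pencil P R A x in auto)
  then show "(mat_inv P *\<^sub>v (quad_pencil t P R S *\<^sub>v x)) $ i
      = (t * t - 1) * x $ i + (1 - t) * (mat_inv P *\<^sub>v (R *\<^sub>v x)) $ i + (mat_inv P *\<^sub>v (A *\<^sub>v x)) $ i"
    using QPx by simp
qed

lemma weak_regular_double_splittingD:
  assumes "weak_regular_double_splitting n A P R S"
  shows "mat_inv P * R \<in> carrier_mat n n" "- (mat_inv P * S) \<in> carrier_mat n n"
    "nonneg_mat (mat_inv P * R)" "nonneg_mat (- (mat_inv P * S))"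
  using assms double_splitting_mat_inv[of n A P R S]
  unfolding weak_regular_double_splitting_def double_splitting_def by auto

lemma rho_iter_mat_le_of_pencil_nonneg:
  assumes ws: "weak_regular_double_splitting n A P R S" and "0 < n"
    and x: "x \<in> carrier_vec n" and "\<And>i. i < n \<Longrightarrow> 0 < x $ i" and "0 < t"
    and "\<And>i. i < n \<Longrightarrow> 0 \<le> (mat_inv P *\<^sub>v (quad_pencil t P R S *\<^sub>v x)) $ i"
  shows "rho (iter_mat n P R S) \<le> t"
  unfolding iter_mat_def
proof (rule rho_companion_block_mat_le[OF weak_regular_double_splittingD[OF ws] assms(2-5)])
  fix i assume "i < n"
  with assms(6)[OF this] show "t * ((mat_inv P * R) *\<^sub>v x) $ i + ((- (mat_inv P * S)) *\<^sub>v x) $ i \<le> t * t * x $ i"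
    using mat_inv_quad_pencil_mult_vec(1)[of n A P R S x i t] ws x
    unfolding weak_regular_double_splitting_def by linarith
qed

lemma rho_iter_mat_ge_of_pencil_nonpos:
  assumes ws: "weak_regular_double_splitting n A P R S" and "0 < n"
    and x: "x \<in> carrier_vec n" and "\<And>i. i < n \<Longrightarrow> 0 \<le> x $ i" and "\<exists>i<n. 0 < x $ i" and "0 < t"
    and "\<And>i. i < n \<Longrightarrow> (mat_inv P *\<^sub>v (quad_pencil t P R S *\<^sub>v x)) $ i \<le> 0"
  shows "t \<le> rho (iter_mat n P R S)"
  unfolding iter_mat_def
proof (rule rho_companion_block_mat_ge[OF weak_regular_double_splittingD[OF ws] assms(2-6)])
  fix i assume "i < n"
  with assms(7)[OF this] show "t * t * x $ i \<le> t * ((mat_inv P * R) *\<^sub>v x) $ i + ((- (mat_inv P * S)) *\<^sub>v x) $ i"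
    using mat_inv_quad_pencil_mult_vec(1)[of n A P R S x i t] ws x
    unfolding weak_regular_double_splitting_def by linarith
qed

lemma regular_imp_weak_regular_double_splitting:
  assumes "regular_double_splitting n A P R S"
  shows "weak_regular_double_splitting n A P R S"
proof -
  have R: "R \<in> carrier_mat n n" and S: "S \<in> carrier_mat n n" and "nonneg_mat (mat_inv P)"
    and "nonneg_mat R" and "nonneg_mat (- S)" and ds: "double_splitting n A P R S"
    using assms unfolding regular_double_splitting_def double_splitting_def by auto
  note Q = double_splitting_mat_inv[OF ds]
  have "mat_inv P * (- S) = - (mat_inv P * S)" using Q S by (simp add: uminus_mult_right_mat)
  then show ?thesis
    using assms nonneg_mult_mat[OF Q(1) R] nonneg_mult_mat[OF Q(1), of "- S" n] S
    unfolding regular_double_splitting_def weak_regular_double_splitting_def by auto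
qed

lemma exists_pos_scale_le:
  assumes "\<And>i. i < n \<Longrightarrow> 0 < x $ i" and "\<And>i. i < n \<Longrightarrow> 0 < (g :: real vec) $ i"
  obtains c where "0 < c" and "\<And>i. i < n \<Longrightarrow> c * x $ i \<le> g $ i"
proof
  let ?c = "Min (insert 1 ((\<lambda>i. g $ i / x $ i) ` {..<n}))"
  show "0 < ?c" using assms by auto
  show "?c * x $ i \<le> g $ i" if "i < n" for i
    using Min_le[of "insert 1 ((\<lambda>i. g $ i / x $ i) ` {..<n})" "g $ i / x $ i"] assms(1)[OF that] that
    by (simp add: le_divide_eq)
qed

lemma rho_iter_mat_less_1:
  assumes n: "0 < n" and A: "A \<in> carrier_mat n n" and "invertible_mat A" and "nonneg_mat (mat_inv A)"
    and ws: "weak_regular_double_splitting n A P R S"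
  shows "rho (iter_mat n P R S) < 1"
proof -
  note Ai = mat_inv_inverse[OF A \<open>invertible_mat A\<close>]
  have ds: "double_splitting n A P R S" and P: "P \<in> carrier_mat n n" and R: "R \<in> carrier_mat n n"
    and "nonneg_mat (mat_inv P)" and "nonneg_mat (mat_inv P * R)"
    using ws unfolding weak_regular_double_splitting_def double_splitting_def by auto
  note Q = double_splitting_mat_inv[OF ds]
  define ones where "ones = vec n (\<lambda>_. 1 :: real)"
  have ones: "ones \<in> carrier_vec n" and ones_pos: "\<And>i. i < n \<Longrightarrow> 0 < ones $ i"
    unfolding ones_def by auto
  define x where "x = mat_inv A *\<^sub>v ones"
  have x: "x \<in> carrier_vec n" unfolding x_def using Ai ones by simp
  have x_pos: "0 < x $ i" if "i < n" for i
    unfolding x_def by (rule nonneg_mult_mat_vec_pos[OF Ai(1) assms(4) A Ai(3) ones ones_pos that])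
  have Ax: "A *\<^sub>v x = ones" unfolding x_def using assoc_mult_mat_vec[OF A Ai(1) ones] Ai(2) ones by simp
  have QAx_pos: "0 < (mat_inv P *\<^sub>v (A *\<^sub>v x)) $ i" if "i < n" for i
    unfolding Ax by (rule nonneg_mult_mat_vec_pos[OF Q(1) \<open>nonneg_mat (mat_inv P)\<close> P Q(2) ones ones_pos that])
  obtain c where "0 < c" and c: "\<And>i. i < n \<Longrightarrow> c * x $ i \<le> (mat_inv P *\<^sub>v (A *\<^sub>v x)) $ i"
    using exists_pos_scale_le[OF x_pos QAx_pos] by blast
  define t where "t = max (1 / 2) (1 - c / 2)"
  have t: "0 < t" "t < 1" "1 - t * t \<le> c"
  proof -
    show "0 < t" "t < 1" using \<open>0 < c\<close> unfolding t_def by auto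
    have "1 - t * t = (1 - t) * (1 + t)" by (simp add: algebra_simps)
    also have "\<dots> \<le> (1 - t) * 2" using \<open>t < 1\<close> by (intro mult_left_mono) auto
    also have "\<dots> \<le> c" using max.cobounded2[of "1 - c / 2" "1 / 2", folded t_def] by simp
    finally show "1 - t * t \<le> c" .
  qed
  have "rho (iter_mat n P R S) \<le> t"
  proof (rule rho_iter_mat_le_of_pencil_nonneg[OF ws n x x_pos \<open>0 < t\<close>])
    fix i assume i: "i < n"
    have "0 \<le> (mat_inv P *\<^sub>v (R *\<^sub>v x)) $ i"
      using nonneg_mult_mat_vec_nonneg[OF _ \<open>nonneg_mat (mat_inv P * R)\<close> x _ i] x_pos Q(1) R x
      by (simp add: less_imp_le)
    moreover have "(1 - t * t) * x $ i \<le> c * x $ i"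
      using t x_pos[OF i] by (intro mult_right_mono) auto
    ultimately show "0 \<le> (mat_inv P *\<^sub>v (quad_pencil t P R S *\<^sub>v x)) $ i"
      unfolding mat_inv_quad_pencil_mult_vec(2)[OF ds x i]
      using c[OF i] t mult_nonneg_nonneg[of "1 - t" "(mat_inv P *\<^sub>v (R *\<^sub>v x)) $ i"]
      by (simp add: algebra_simps)
  qed
  with t show ?thesis by simp
qed

lemma mat_inv_quad_pencil_mono:
  assumes ds1: "double_splitting n A P1 R1 S1" and ds2: "double_splitting n A P2 R2 S2"
    and "nonneg_mat (mat_inv P2)" and "nonneg_mat R1"
    and "nonneg_mat (mat_inv P1 - mat_inv P2)" and "nonneg_mat (R1 - R2)"
    and x: "x \<in> carrier_vec n" and x_nonneg: "\<And>j. j < n \<Longrightarrow> 0 \<le> x $ j"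
    and Ax_nonneg: "\<And>j. j < n \<Longrightarrow> 0 \<le> (A *\<^sub>v x) $ j" and "t \<le> 1" and i: "i < n"
  shows "(mat_inv P2 *\<^sub>v (quad_pencil t P2 R2 S2 *\<^sub>v x)) $ i
      \<le> (mat_inv P1 *\<^sub>v (quad_pencil t P1 R1 S1 *\<^sub>v x)) $ i"
proof -
  have A: "A \<in> carrier_mat n n" and R1: "R1 \<in> carrier_mat n n" and R2: "R2 \<in> carrier_mat n n"
    using ds1 ds2 unfolding double_splitting_def by auto
  note Q1 = double_splitting_mat_inv(1)[OF ds1] and Q2 = double_splitting_mat_inv(1)[OF ds2]
  have "(mat_inv P2 *\<^sub>v (R2 *\<^sub>v x)) $ i \<le> (mat_inv P2 *\<^sub>v (R1 *\<^sub>v x)) $ i"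
    by (rule nonneg_mult_mat_vec_mono[OF Q2 \<open>nonneg_mat (mat_inv P2)\<close> _ _ _ i])
       (use R1 R2 x nonneg_mat_diff_mult_vec_le[OF R1 R2 \<open>nonneg_mat (R1 - R2)\<close> x x_nonneg] in auto)
  also have "\<dots> \<le> (mat_inv P1 *\<^sub>v (R1 *\<^sub>v x)) $ i"
    by (rule nonneg_mat_diff_mult_vec_le[OF Q1 Q2 \<open>nonneg_mat (mat_inv P1 - mat_inv P2)\<close> _ _ i])
       (use R1 x nonneg_mult_mat_vec_nonneg[OF R1 \<open>nonneg_mat R1\<close> x x_nonneg] in auto)
  finally have "(1 - t) * (mat_inv P2 *\<^sub>v (R2 *\<^sub>v x)) $ i \<le> (1 - t) * (mat_inv P1 *\<^sub>v (R1 *\<^sub>v x)) $ i"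
    using \<open>t \<le> 1\<close> by (intro mult_left_mono) auto
  moreover have "(mat_inv P2 *\<^sub>v (A *\<^sub>v x)) $ i \<le> (mat_inv P1 *\<^sub>v (A *\<^sub>v x)) $ i"
    by (rule nonneg_mat_diff_mult_vec_le[OF Q1 Q2 \<open>nonneg_mat (mat_inv P1 - mat_inv P2)\<close> _ Ax_nonneg i])
       (use A x in auto)
  ultimately show ?thesis
    unfolding mat_inv_quad_pencil_mult_vec(2)[OF ds1 x i] mat_inv_quad_pencil_mult_vec(2)[OF ds2 x i]
    by linarith
qed

lemma regular_double_splitting_quad_pencil:
  assumes rs: "regular_double_splitting n A P R S" and "0 \<le> t" and "t \<le> 1"
  obtains H where "H \<in> carrier_mat n n" and "nonneg_mat H"
    and "quad_pencil t P R S = (t * t) \<cdot>\<^sub>m A - H"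
proof
  have A: "A \<in> carrier_mat n n" and P: "P \<in> carrier_mat n n" and R: "R \<in> carrier_mat n n"
    and S: "S \<in> carrier_mat n n" and "A = P - R + S" and "nonneg_mat R" and "nonneg_mat (- S)"
    using rs unfolding regular_double_splitting_def double_splitting_def by auto
  define H where "H = (t * (1 - t)) \<cdot>\<^sub>m R + (1 - t * t) \<cdot>\<^sub>m (- S)"
  show "H \<in> carrier_mat n n" unfolding H_def using R S by auto
  have "0 \<le> t * (1 - t)" "0 \<le> 1 - t * t" using assms(2,3) by (auto simp: mult_le_one)
  then show "nonneg_mat H"
    using nonneg_matD[OF \<open>nonneg_mat R\<close> R] nonneg_matD[OF \<open>nonneg_mat (- S)\<close>, of n n] R S
    unfolding nonneg_mat_def H_def by (auto intro!: order_trans[OF mult_nonneg_nonpos mult_nonneg_nonneg])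
  show "quad_pencil t P R S = (t * t) \<cdot>\<^sub>m A - H"
    using A P R S \<open>A = P - R + S\<close>
    by (intro eq_matI) (auto simp: quad_pencil_def H_def algebra_simps)
qed

lemma regular_double_splitting_quad_pencil_mat_inv:
  assumes rs: "regular_double_splitting n A P R S" and A: "A \<in> carrier_mat n n"
    and "invertible_mat A" and "nonneg_mat (mat_inv A)" and "0 \<le> t" and "t \<le> 1"
  obtains L where "L \<in> carrier_mat n n" and "nonneg_mat L"
    and "\<And>w j. w \<in> carrier_vec n \<Longrightarrow> j < n \<Longrightarrow>
      (quad_pencil t P R S *\<^sub>v (mat_inv A *\<^sub>v w)) $ j = t * t * w $ j - (L *\<^sub>v w) $ j"
proof -
  note Ai = mat_inv_inverse[OF A \<open>invertible_mat A\<close>]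
  obtain H where H: "H \<in> carrier_mat n n" and "nonneg_mat H"
    and pencil: "quad_pencil t P R S = (t * t) \<cdot>\<^sub>m A - H"
    using regular_double_splitting_quad_pencil[OF rs \<open>0 \<le> t\<close> \<open>t \<le> 1\<close>] by blast
  show ?thesis
  proof (rule that[of "H * mat_inv A"])
    show "H * mat_inv A \<in> carrier_mat n n" using H Ai by auto
    show "nonneg_mat (H * mat_inv A)" by (rule nonneg_mult_mat[OF H Ai(1) \<open>nonneg_mat H\<close> assms(4)])
    fix w :: "real vec" and j assume w: "w \<in> carrier_vec n" and j: "j < n"
    show "(quad_pencil t P R S *\<^sub>v (mat_inv A *\<^sub>v w)) $ j = t * t * w $ j - ((H * mat_inv A) *\<^sub>v w) $ j"
      using assoc_mult_mat_vec[OF A Ai(1) w] assoc_mult_mat_vec[OF H Ai(1) w] Ai w j A H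
      unfolding pencil by (simp add: minus_mult_distrib_mat_vec[of _ n n] smult_mat_mult_mat_vec[of _ n n])
  qed
qed

lemma rho_iter_mat_ge_of_regular_pencil_nonpos:
  assumes n: "0 < n" and rs1: "regular_double_splitting n A P1 R1 S1"
    and ws2: "weak_regular_double_splitting n A P2 R2 S2"
    and "nonneg_mat (mat_inv P1 - mat_inv P2)" and "nonneg_mat (R1 - R2)"
    and x: "x \<in> carrier_vec n" and x_nonneg: "\<And>i. i < n \<Longrightarrow> 0 \<le> x $ i" and "\<exists>i<n. 0 < x $ i"
    and "\<And>i. i < n \<Longrightarrow> 0 \<le> (A *\<^sub>v x) $ i" and t: "0 < t" "t \<le> 1"
    and pencil_nonpos: "\<And>i. i < n \<Longrightarrow> (quad_pencil t P1 R1 S1 *\<^sub>v x) $ i \<le> 0"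
  shows "t \<le> rho (iter_mat n P2 R2 S2)"
proof (rule rho_iter_mat_ge_of_pencil_nonpos[OF ws2 n x x_nonneg \<open>\<exists>i<n. 0 < x $ i\<close> t(1)])
  have ds1: "double_splitting n A P1 R1 S1" and ds2: "double_splitting n A P2 R2 S2"
    and P1: "P1 \<in> carrier_mat n n" and R1: "R1 \<in> carrier_mat n n" and S1: "S1 \<in> carrier_mat n n"
    and "nonneg_mat R1" and "nonneg_mat (mat_inv P1)" "nonneg_mat (mat_inv P2)"
    using rs1 ws2 unfolding regular_double_splitting_def weak_regular_double_splitting_def
      double_splitting_def by auto
  fix i assume i: "i < n"
  have "(mat_inv P1 *\<^sub>v (quad_pencil t P1 R1 S1 *\<^sub>v x)) $ i \<le> (mat_inv P1 *\<^sub>v 0\<^sub>v n) $ i"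
    by (rule nonneg_mult_mat_vec_mono[OF double_splitting_mat_inv(1)[OF ds1] \<open>nonneg_mat (mat_inv P1)\<close> _ _ _ i])
       (use mult_mat_vec_carrier[OF quad_pencil_carrier[OF P1 R1 S1] x] pencil_nonpos in auto)
  then show "(mat_inv P2 *\<^sub>v (quad_pencil t P2 R2 S2 *\<^sub>v x)) $ i \<le> 0"
    using mat_inv_quad_pencil_mono[OF ds1 ds2 \<open>nonneg_mat (mat_inv P2)\<close> \<open>nonneg_mat R1\<close> assms(4,5)
        x x_nonneg assms(9) t(2) i] double_splitting_mat_inv(1)[OF ds1] i
    by simp
qed

lemma mat_inv_mult_vec_nonneg:
  assumes A: "A \<in> carrier_mat n n" and "invertible_mat A" and "nonneg_mat (mat_inv A)"
    and w: "w \<in> carrier_vec n" and w_nonneg: "\<And>i. i < n \<Longrightarrow> 0 \<le> w $ i" and "\<exists>i<n. 0 < w $ i"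
  shows "mat_inv A *\<^sub>v w \<in> carrier_vec n" and "A *\<^sub>v (mat_inv A *\<^sub>v w) = w"
    and "\<And>i. i < n \<Longrightarrow> 0 \<le> (mat_inv A *\<^sub>v w) $ i" and "\<exists>i<n. 0 < (mat_inv A *\<^sub>v w) $ i"
proof -
  note Ai = mat_inv_inverse[OF A \<open>invertible_mat A\<close>]
  show x: "mat_inv A *\<^sub>v w \<in> carrier_vec n" using Ai w by simp
  show Ax: "A *\<^sub>v (mat_inv A *\<^sub>v w) = w" using assoc_mult_mat_vec[OF A Ai(1) w] Ai(2) w by simp
  show x_nonneg: "0 \<le> (mat_inv A *\<^sub>v w) $ i" if "i < n" for i
    by (rule nonneg_mult_mat_vec_nonneg[OF Ai(1) \<open>nonneg_mat (mat_inv A)\<close> w w_nonneg that])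
  show "\<exists>i<n. 0 < (mat_inv A *\<^sub>v w) $ i"
  proof (rule ccontr)
    assume "\<not> (\<exists>i<n. 0 < (mat_inv A *\<^sub>v w) $ i)"
    then have "(mat_inv A *\<^sub>v w) $ i = 0" if "i < n" for i
      using x_nonneg[OF that] that by (meson antisym not_less)
    then have "mat_inv A *\<^sub>v w = 0\<^sub>v n" using Ai(1) by (intro eq_vecI) auto
    then show False using Ax A \<open>\<exists>i<n. 0 < w $ i\<close> by auto
  qed
qed

lemma comparison_rho_iter_mat_le:
  assumes n: "0 < n" and A: "A \<in> carrier_mat n n" and "invertible_mat A" and "nonneg_mat (mat_inv A)"
    and rs1: "regular_double_splitting n A P1 R1 S1"
    and ws2: "weak_regular_double_splitting n A P2 R2 S2"
    and "nonneg_mat (mat_inv P1 - mat_inv P2)" and "nonneg_mat (R1 - R2)"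
    and "rho (iter_mat n P2 R2 S2) < t" and "t < 1"
  shows "rho (iter_mat n P1 R1 S1) \<le> t"
proof -
  note Ai = mat_inv_inverse[OF A \<open>invertible_mat A\<close>]
  have ds1: "double_splitting n A P1 R1 S1" and "nonneg_mat (mat_inv P1)"
    using rs1 unfolding regular_double_splitting_def by auto
  have "0 \<le> rho (iter_mat n P2 R2 S2)"
    by (rule rho_nonneg[of _ "n + n"])
       (use n weak_regular_double_splittingD[OF ws2] in \<open>auto simp: iter_mat_def\<close>)
  then have t: "0 < t" using \<open>rho (iter_mat n P2 R2 S2) < t\<close> by simp
  obtain L where L: "L \<in> carrier_mat n n" and "nonneg_mat L"
    and pencil_Ai: "\<And>w j. w \<in> carrier_vec n \<Longrightarrow> j < n \<Longrightarrow>
      (quad_pencil t P1 R1 S1 *\<^sub>v (mat_inv A *\<^sub>v w)) $ j = t * t * w $ j - (L *\<^sub>v w) $ j"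
    using regular_double_splitting_quad_pencil_mat_inv[OF rs1 A \<open>invertible_mat A\<close> assms(4), of t]
      t \<open>t < 1\<close> by auto
  have pencil_carrier: "quad_pencil t P1 R1 S1 \<in> carrier_mat n n"
    using rs1 quad_pencil_carrier unfolding regular_double_splitting_def double_splitting_def by blast
  consider (sub) "rho L < t * t" | (super) "t * t \<le> rho L" by linarith
  then show ?thesis
  proof cases
    case sub
    then obtain w where w: "w \<in> carrier_vec n" and w_pos: "\<And>i. i < n \<Longrightarrow> 0 < w $ i"
      and Lw: "\<And>i. i < n \<Longrightarrow> (L *\<^sub>v w) $ i < t * t * w $ i"
      using exists_pos_subinvariant_vec[OF L \<open>nonneg_mat L\<close> n] by blast
    have x_pos: "0 < (mat_inv A *\<^sub>v w) $ i" if "i < n" for i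
      by (rule nonneg_mult_mat_vec_pos[OF Ai(1) assms(4) A Ai(3) w w_pos that])
    show ?thesis
    proof (rule rho_iter_mat_le_of_pencil_nonneg[OF rs1[THEN regular_imp_weak_regular_double_splitting] n _ x_pos t])
      fix i assume "i < n"
      show "0 \<le> (mat_inv P1 *\<^sub>v (quad_pencil t P1 R1 S1 *\<^sub>v (mat_inv A *\<^sub>v w))) $ i"
        by (rule nonneg_mult_mat_vec_nonneg[OF double_splitting_mat_inv(1)[OF ds1] \<open>nonneg_mat (mat_inv P1)\<close> _ _ \<open>i < n\<close>])
           (use pencil_carrier Ai w pencil_Ai[OF w] Lw in \<open>auto simp: less_imp_le\<close>)
    qed (use Ai w in simp)
  next
    case super
    then obtain w where w: "w \<in> carrier_vec n" and w_nonneg: "\<And>i. i < n \<Longrightarrow> 0 \<le> w $ i"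
      and "\<exists>i<n. 0 < w $ i" and Lw: "\<And>i. i < n \<Longrightarrow> rho L * w $ i \<le> (L *\<^sub>v w) $ i"
      using exists_nonneg_superinvariant_vec[OF L \<open>nonneg_mat L\<close> n] by blast
    define x where "x = mat_inv A *\<^sub>v w"
    have x: "x \<in> carrier_vec n" and Ax: "A *\<^sub>v x = w" and x_nonneg: "\<And>i. i < n \<Longrightarrow> 0 \<le> x $ i"
      and "\<exists>i<n. 0 < x $ i"
      using mat_inv_mult_vec_nonneg[OF A \<open>invertible_mat A\<close> assms(4) w w_nonneg \<open>\<exists>i<n. 0 < w $ i\<close>]
      unfolding x_def by auto
    have "t \<le> rho (iter_mat n P2 R2 S2)"
    proof (rule rho_iter_mat_ge_of_regular_pencil_nonpos[OF n rs1 ws2 assms(7,8) x x_nonneg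
          \<open>\<exists>i<n. 0 < x $ i\<close> _ t less_imp_le[OF \<open>t < 1\<close>]])
      show "0 \<le> (A *\<^sub>v x) $ i" if "i < n" for i using w_nonneg[OF that] unfolding Ax .
      show "(quad_pencil t P1 R1 S1 *\<^sub>v x) $ i \<le> 0" if "i < n" for i
        using pencil_Ai[OF w that] Lw[OF that] mult_right_mono[OF super w_nonneg[OF that]]
        unfolding x_def by simp
    qed
    with \<open>rho (iter_mat n P2 R2 S2) < t\<close> show ?thesis by simp
  qed
qed

theorem corollary3p4:
  fixes n :: nat and A P1 R1 S1 P2 R2 S2 :: "real mat"
  assumes "n > 0"
    and "A \<in> carrier_mat n n" and "invertible_mat A" and "nonneg_mat (mat_inv A)"
    and "regular_double_splitting n A P1 R1 S1"
    and "weak_regular_double_splitting n A P2 R2 S2"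
    and "nonneg_mat (mat_inv P1 - mat_inv P2)"
    and "nonneg_mat (R1 - R2)"
  shows "rho (iter_mat n P1 R1 S1) \<le> rho (iter_mat n P2 R2 S2) \<and> rho (iter_mat n P2 R2 S2) < 1"
proof
  show less_1: "rho (iter_mat n P2 R2 S2) < 1"
    by (rule rho_iter_mat_less_1[OF assms(1-4,6)])
  show "rho (iter_mat n P1 R1 S1) \<le> rho (iter_mat n P2 R2 S2)"
  proof (rule dense_ge_bounded[OF less_1])
    fix t assume "rho (iter_mat n P2 R2 S2) < t" "t < 1"
    then show "rho (iter_mat n P1 R1 S1) \<le> t" by (rule comparison_rho_iter_mat_le[OF assms])
  qed
qed

end
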